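(* Let $i\in\{3\frac{1}{2},4,5\}$ and let $X$ be a locally connected locally compact $T_i$-space. Then the partially ordered set $(\mathscr{Y}_i(X),\leq)$ of all $T_i$ one-point connectifications of $X$ is a compact conditionally complete lattice.
   Context: Conventions: $T_{3\frac12}$ = completely regular and $T_1$; $T_4$ = normal and $T_1$; $T_5$ = hereditarily normal (every subspace normal) and $T_1$. A one-point connectification of $X$ is a connected space $Y$ containing $X$ as a dense subspace with $Y\setminus X$ a singleton; two are identified if there is a homeomorphism between them fixing every point of $X$. $\mathscr{Y}_i(X)$ is the set of (equivalence classes of) $T_i$ one-point connectifications of $X$, ordered by $Y_1\leq Y_2$ iff there is a continuous map $f:Y_2\to Y_1$ fixing every point of $X$. A conditionally complete lattice is a partially ordered set in which every non-empty bounded subset has a least upper bound and a greatest lower bound. A conditionally complete lattice $\mathscr{L}$ is compact if for every subset $\mathscr{H}\subseteq\mathscr{L}$ with no least upper bound there is a finite subset $\mathscr{H}'\subseteq\mathscr{H}$ which also has no least upper bound. *)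

theory Defs
  imports "HOL-Analysis.Analysis"
begin

datatype sep_axiom = T3half | T4 | T5

definition hereditarily_normal_space :: "'a topology \<Rightarrow> bool" where
  "hereditarily_normal_space X \<longleftrightarrow>
     (\<forall>S. S \<subseteq> topspace X \<longrightarrow> normal_space (subtopology X S))"

fun T_space :: "sep_axiom \<Rightarrow> 'a topology \<Rightarrow> bool" where
  "T_space T3half X \<longleftrightarrow> completely_regular_space X \<and> t1_space X"
| "T_space T4 X \<longleftrightarrow> normal_space X \<and> t1_space X"
| "T_space T5 X \<longleftrightarrow> hereditarily_normal_space X \<and> t1_space X"

text \<open>One-point connectifications of X, in canonical form: the underlying set is
  None added to Some ` topspace X, where X is identified with its
  copy via Some. Two one-point connectifications are identified iff there is a
  homeomorphism fixing X pointwise; such a homeomorphism between canonical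
  representatives must also fix the extra point, hence equivalence classes correspond
  exactly to topologies on this fixed carrier.\<close>

definition one_point_connectification :: "'a topology \<Rightarrow> 'a option topology \<Rightarrow> bool" where
  "one_point_connectification X Y \<longleftrightarrow>
     topspace Y = insert None (Some ` topspace X) \<and>
     homeomorphic_map X (subtopology Y (Some ` topspace X)) Some \<and>
     Y closure_of (Some ` topspace X) = topspace Y \<and>
     connected_space Y"

definition connectifications :: "sep_axiom \<Rightarrow> 'a topology \<Rightarrow> 'a option topology set" where
  "connectifications i X = {Y. one_point_connectification X Y \<and> T_space i Y}"

definition conn_le :: "'a topology \<Rightarrow> 'a option topology \<Rightarrow> 'a option topology \<Rightarrow> bool" where
  "conn_le X Y1 Y2 \<longleftrightarrow>
     (\<exists>f. continuous_map Y2 Y1 f \<and> (\<forall>x\<in>topspace X. f (Some x) = Some x))"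

definition partial_order_on_set :: "'b set \<Rightarrow> ('b \<Rightarrow> 'b \<Rightarrow> bool) \<Rightarrow> bool" where
  "partial_order_on_set L le \<longleftrightarrow>
     (\<forall>x\<in>L. le x x) \<and>
     (\<forall>x\<in>L. \<forall>y\<in>L. le x y \<and> le y x \<longrightarrow> x = y) \<and>
     (\<forall>x\<in>L. \<forall>y\<in>L. \<forall>z\<in>L. le x y \<and> le y z \<longrightarrow> le x z)"

definition is_ub :: "'b set \<Rightarrow> ('b \<Rightarrow> 'b \<Rightarrow> bool) \<Rightarrow> 'b set \<Rightarrow> 'b \<Rightarrow> bool" where
  "is_ub L le H u \<longleftrightarrow> u \<in> L \<and> (\<forall>h\<in>H. le h u)"

definition is_lb :: "'b set \<Rightarrow> ('b \<Rightarrow> 'b \<Rightarrow> bool) \<Rightarrow> 'b set \<Rightarrow> 'b \<Rightarrow> bool" where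
  "is_lb L le H u \<longleftrightarrow> u \<in> L \<and> (\<forall>h\<in>H. le u h)"

definition has_lub :: "'b set \<Rightarrow> ('b \<Rightarrow> 'b \<Rightarrow> bool) \<Rightarrow> 'b set \<Rightarrow> bool" where
  "has_lub L le H \<longleftrightarrow> (\<exists>u. is_ub L le H u \<and> (\<forall>v. is_ub L le H v \<longrightarrow> le u v))"

definition has_glb :: "'b set \<Rightarrow> ('b \<Rightarrow> 'b \<Rightarrow> bool) \<Rightarrow> 'b set \<Rightarrow> bool" where
  "has_glb L le H \<longleftrightarrow> (\<exists>u. is_lb L le H u \<and> (\<forall>v. is_lb L le H v \<longrightarrow> le v u))"

definition cond_complete_lattice :: "'b set \<Rightarrow> ('b \<Rightarrow> 'b \<Rightarrow> bool) \<Rightarrow> bool" where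
  "cond_complete_lattice L le \<longleftrightarrow>
     partial_order_on_set L le \<and>
     (\<forall>H. H \<subseteq> L \<and> H \<noteq> {} \<and> (\<exists>u. is_ub L le H u) \<and> (\<exists>l. is_lb L le H l)
          \<longrightarrow> has_lub L le H \<and> has_glb L le H)"

definition compact_cond_complete_lattice :: "'b set \<Rightarrow> ('b \<Rightarrow> 'b \<Rightarrow> bool) \<Rightarrow> bool" where
  "compact_cond_complete_lattice L le \<longleftrightarrow>
     cond_complete_lattice L le \<and>
     (\<forall>H. H \<subseteq> L \<and> \<not> has_lub L le H \<longrightarrow>
        (\<exists>H'. H' \<subseteq> H \<and> finite H' \<and> \<not> has_lub L le H'))"

end

theory Submission
  imports Defs
begin

text \<open>Since X is locally compact, it is open in each of its Hausdorff one-point connectifications,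
  and a continuous map fixing X must also fix the added point: otherwise Hausdorff separation and
  density of X would give a point of X moved off itself. So the order is simply inclusion of
  topologies on the common carrier. A non-empty family whose finite subfamilies are bounded above
  has as supremum the topology generated by the union of the family. Each neighbourhood of the added
  point in this join is already a neighbourhood in an upper bound of finitely many members, which
  gives density and connectedness; regularity and complete regularity pass to joins, and (hereditary)
  normality follows from that of X because X is an open subspace with one-point complement. The
  remaining claims are order theory: the infimum of a bounded family is the supremum of its lower
  bounds, and a family without supremum has a finite subfamily without upper bound.\<close>

lemma hereditarily_normal_space_eq: "hereditarily_normal_space X \<longleftrightarrow> hereditarily normal_space X"
  by (simp add: hereditarily_normal_space_def hereditarily_def)

lemma T_space_imp_regular_t1_Hausdorff:
  assumes "T_space i Y"
  shows "regular_space Y" "t1_space Y" "Hausdorff_space Y"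
proof -
  have "regular_space Y \<and> t1_space Y"
  proof (cases i)
    case T3half
    then show ?thesis using assms completely_regular_imp_regular_space by auto
  next
    case T4
    then show ?thesis using assms normal_t1_imp_regular_space by auto
  next
    case T5
    then have "normal_space Y" "t1_space Y"
      using assms hereditarily_inc by (auto simp: hereditarily_normal_space_eq)
    then show ?thesis using normal_t1_imp_regular_space by auto
  qed
  then show "regular_space Y" "t1_space Y" "Hausdorff_space Y"
    using regular_t1_imp_Hausdorff_space by auto
qed

lemma one_point_extension_separation:
  assumes reg: "regular_space Z" and A: "openin Z A" and N: "normal_space (subtopology Z A)"
    and sp: "topspace Z \<subseteq> insert p A"
    and S: "closedin Z S" and T: "closedin Z T" and d: "disjnt S T" and pT: "p \<notin> T"
  shows "\<exists>U V. openin Z U \<and> openin Z V \<and> S \<subseteq> U \<and> T \<subseteq> V \<and> disjnt U V"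
proof -
  obtain W where W: "openin Z W" "topspace Z - A \<subseteq> W" "disjnt T (Z closure_of W)"
  proof (cases "p \<in> topspace Z \<and> p \<notin> A")
    case True
    then obtain W where "openin Z W" "p \<in> W" "disjnt T (Z closure_of W)"
      using reg T pT unfolding regular_space by (metis DiffI)
    then show ?thesis using that[of W] sp True by auto
  next
    case False
    then show ?thesis using that[of "{}"] sp by auto
  qed
  have TA: "T \<subseteq> A" using closedin_subset[OF T] sp pT by auto
  let ?S' = "(S \<union> Z closure_of W) \<inter> A"
  have "closedin (subtopology Z A) ?S'"
    using closedin_subtopology S by (metis closedin_Un closedin_closure_of)
  moreover have "closedin (subtopology Z A) T"
    using closedin_subtopology T TA by (metis inf.absorb_iff1)
  moreover have "disjnt ?S' T" using d W(3) unfolding disjnt_def by auto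
  ultimately obtain U V where UV: "openin (subtopology Z A) U" "openin (subtopology Z A) V"
      "?S' \<subseteq> U" "T \<subseteq> V" "disjnt U V"
    using N unfolding normal_space_def by meson
  have U: "openin Z U" and V: "openin Z V" "V \<subseteq> A"
    using UV(1,2) openin_open_subtopology[OF A] by auto
  have "W \<subseteq> Z closure_of W" using closure_of_subset openin_subset[OF W(1)] by blast
  then have "disjnt (U \<union> W) V" using UV(3,5) V(2) unfolding disjnt_def by auto
  moreover have "S \<subseteq> U \<union> W" using UV(3) W(2) closedin_subset[OF S] by auto
  ultimately show ?thesis using U V W(1) UV(4) by blast
qed

text \<open>Normality only has to be checked away from the extra point p, which regularity separates
  from closed sets.\<close>

lemma normal_space_one_point_extension:
  assumes "regular_space Z" "openin Z A" "normal_space (subtopology Z A)"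
    and "topspace Z \<subseteq> insert p A"
  shows "normal_space Z"
  unfolding normal_space_def
proof clarify
  fix S T assume S: "closedin Z S" and T: "closedin Z T" and d: "disjnt S T"
  show "\<exists>U V. openin Z U \<and> openin Z V \<and> S \<subseteq> U \<and> T \<subseteq> V \<and> disjnt U V"
  proof (cases "p \<in> T")
    case False
    then show ?thesis using one_point_extension_separation[OF assms S T d] by blast
  next
    case True
    then have "p \<notin> S" using d unfolding disjnt_def by auto
    then show ?thesis
      using one_point_extension_separation[OF assms T S] d by (meson disjnt_sym)
  qed
qed

lemma hereditarily_normal_space_one_point_extension:
  assumes reg: "regular_space Z" and A: "openin Z A"
    and N: "hereditarily normal_space (subtopology Z A)" and sp: "topspace Z \<subseteq> insert p A"
  shows "hereditarily normal_space Z"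
  unfolding hereditarily
proof
  fix T
  have "openin (subtopology Z T) (T \<inter> A)"
    using openin_subtopology_Int2[OF A] .
  moreover have "normal_space (subtopology (subtopology Z T) (T \<inter> A))"
    using N unfolding hereditarily by (metis subtopology_subtopology Int_commute)
  moreover have "topspace (subtopology Z T) \<subseteq> insert p (T \<inter> A)" using sp by auto
  ultimately show "normal_space (subtopology Z T)"
    by (rule normal_space_one_point_extension[OF regular_space_subtopology[OF reg]])
qed

definition coarser_topology :: "'b topology \<Rightarrow> 'b topology \<Rightarrow> bool" where
  "coarser_topology Y1 Y2 \<longleftrightarrow> (\<forall>U. openin Y1 U \<longrightarrow> openin Y2 U)"

definition join_topology :: "'b topology set \<Rightarrow> 'b topology" where
  "join_topology H = topology_generated_by {U. \<exists>h\<in>H. openin h U}"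

lemma openin_join_topology: "h \<in> H \<Longrightarrow> openin h U \<Longrightarrow> openin (join_topology H) U"
  unfolding join_topology_def by (rule topology_generated_by_Basis) auto

lemma coarser_join_topology: "h \<in> H \<Longrightarrow> coarser_topology h (join_topology H)"
  by (simp add: coarser_topology_def openin_join_topology)

lemma topspace_join_topology:
  assumes "H \<noteq> {}" "\<And>h. h \<in> H \<Longrightarrow> topspace h = T"
  shows "topspace (join_topology H) = T"
proof -
  obtain h where h: "h \<in> H" using assms(1) by auto
  have "\<Union>{U. \<exists>h\<in>H. openin h U} \<subseteq> T" using assms(2) openin_subset by blast
  moreover have "T \<subseteq> \<Union>{U. \<exists>h\<in>H. openin h U}"
    using h assms(2)[OF h] openin_topspace by blast
  ultimately have "\<Union>{U. \<exists>h\<in>H. openin h U} = T" by (rule antisym)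
  then show ?thesis unfolding join_topology_def by simp
qed

lemma join_topology_least:
  assumes "\<And>h. h \<in> H \<Longrightarrow> coarser_topology h Y"
  shows "coarser_topology (join_topology H) Y"
  unfolding coarser_topology_def join_topology_def
proof clarify
  fix U assume "openin (topology_generated_by {U. \<exists>h\<in>H. openin h U}) U"
  then have gen: "generate_topology_on {U. \<exists>h\<in>H. openin h U} U"
    by (rule openin_topology_generated_by)
  show "openin Y U"
  proof (rule generate_topology_on_coarsest[OF istopology_openin _ gen])
    fix S assume "S \<in> {U. \<exists>h\<in>H. openin h U}"
    then show "openin Y S" using assms unfolding coarser_topology_def by blast
  qed
qed

lemma join_topology_mono: "F \<subseteq> H \<Longrightarrow> coarser_topology (join_topology F) (join_topology H)"
  by (meson coarser_join_topology join_topology_least subsetD)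

lemma closedin_join_topology:
  assumes "\<And>h. h \<in> H \<Longrightarrow> topspace h = T" "h \<in> H" "closedin h C"
  shows "closedin (join_topology H) C"
proof -
  have "topspace (join_topology H) = T" using assms(1,2) topspace_join_topology by blast
  then show ?thesis using assms openin_join_topology unfolding closedin_def by metis
qed

lemma continuous_map_join_topology:
  assumes "\<And>h. h \<in> H \<Longrightarrow> topspace h = T" "h \<in> H" "continuous_map h Y f"
  shows "continuous_map (join_topology H) Y f"
  using assms openin_join_topology topspace_join_topology[of H T]
  unfolding continuous_map_def by fastforce

text \<open>Open sets of the join are unions of finite intersections of open sets of its members.\<close>

lemma join_topology_neighbourhood_induct [consumes 2, case_names Basis Int mono]:
  assumes "openin (join_topology H) U" "x \<in> U"
    and P_Basis: "\<And>h V x. h \<in> H \<Longrightarrow> openin h V \<Longrightarrow> x \<in> V \<Longrightarrow> P x V"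
    and P_Int: "\<And>x V W. P x V \<Longrightarrow> P x W \<Longrightarrow> P x (V \<inter> W)"
    and P_mono: "\<And>x V W. P x V \<Longrightarrow> V \<subseteq> W \<Longrightarrow> P x W"
  shows "P x U"
proof -
  have "generate_topology_on {U. \<exists>h\<in>H. openin h U} U"
    using assms(1) unfolding join_topology_def by (rule openin_topology_generated_by)
  then have "\<forall>x\<in>U. P x U"
  proof (induction rule: generate_topology_on.induct)
    case (Int a b)
    then show ?case using P_Int by blast
  next
    case (UN K)
    then show ?case using P_mono by (meson UnionE Union_upper)
  next
    case (Basis s)
    then show ?case using P_Basis by blast
  qed simp
  then show ?thesis using assms(2) by blast
qed

lemma regular_space_join_topology:
  assumes "\<And>h. h \<in> H \<Longrightarrow> topspace h = T" "\<And>h. h \<in> H \<Longrightarrow> regular_space h"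
  shows "regular_space (join_topology H)"
proof -
  let ?J = "join_topology H"
  have "\<exists>U V. openin ?J U \<and> closedin ?J V \<and> x \<in> U \<and> U \<subseteq> V \<and> V \<subseteq> W"
    if "openin ?J W" "x \<in> W" for W x
    using that
  proof (induction rule: join_topology_neighbourhood_induct)
    case (Basis h V x)
    then have "neighbourhood_base_of (closedin h) h"
      using assms(2) neighbourhood_base_of_closedin by blast
    then obtain U C where "openin h U" "closedin h C" "x \<in> U" "U \<subseteq> C" "C \<subseteq> V"
      using Basis(2,3) unfolding neighbourhood_base_of by meson
    moreover have "openin ?J U" using Basis(1) \<open>openin h U\<close> by (rule openin_join_topology)
    moreover have "closedin ?J C" using assms(1) Basis(1) \<open>closedin h C\<close> by (rule closedin_join_topology)
    ultimately show ?case by blast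
  next
    case (Int x V W)
    then show ?case by (meson closedin_Int openin_Int Int_mono IntI)
  next
    case (mono x V W)
    then show ?case by blast
  qed
  then show ?thesis
    unfolding neighbourhood_base_of_closedin[symmetric] neighbourhood_base_of by blast
qed

lemma completely_regular_space_join_topology:
  assumes "\<And>h. h \<in> H \<Longrightarrow> topspace h = T" "\<And>h. h \<in> H \<Longrightarrow> completely_regular_space h"
  shows "completely_regular_space (join_topology H)"
proof -
  let ?J = "join_topology H"
  have "\<exists>f. continuous_map ?J euclideanreal f \<and> f x = 0 \<and> f ` (topspace ?J - W) \<subseteq> {1}"
    if "openin ?J W" "x \<in> W" for W x
    using that
  proof (induction rule: join_topology_neighbourhood_induct)
    case (Basis h V x)
    then obtain f where f: "continuous_map h euclideanreal f" "f x = 0" "f ` (topspace h - V) \<subseteq> {1}"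
      using assms(2) unfolding completely_regular_space_alt' by meson
    have "topspace ?J = topspace h" using Basis(1) assms(1) topspace_join_topology by blast
    then show ?case using continuous_map_join_topology[OF assms(1) Basis(1) f(1)] f(2,3) by auto
  next
    case (Int x V W)
    then obtain f g where f: "continuous_map ?J euclideanreal f" "f x = 0" "f ` (topspace ?J - V) \<subseteq> {1}"
      and g: "continuous_map ?J euclideanreal g" "g x = 0" "g ` (topspace ?J - W) \<subseteq> {1}"
      by blast
    have "continuous_map ?J euclideanreal (\<lambda>y. min 1 (max (f y) (g y)))"
      using f(1) g(1) by (intro continuous_map_real_min continuous_map_real_max) auto
    moreover have "(\<lambda>y. min 1 (max (f y) (g y))) ` (topspace ?J - V \<inter> W) \<subseteq> {1}"
      using f(3) g(3) by (force simp: image_subset_iff)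
    ultimately show ?case using f(2) g(2) by (intro exI[of _ "\<lambda>y. min 1 (max (f y) (g y))"]) auto
  next
    case (mono x V W)
    then show ?case by (meson Diff_mono image_mono order_refl order_trans)
  qed
  then show ?thesis unfolding completely_regular_space_alt' by blast
qed

lemma openin_join_topology_locally_finite:
  assumes "openin (join_topology H) V" "x \<in> V"
  shows "\<exists>F W. finite F \<and> F \<subseteq> H \<and> openin (join_topology F) W \<and> x \<in> W \<and> W \<subseteq> V"
  using assms
proof (induction rule: join_topology_neighbourhood_induct)
  case (Basis h V x)
  then show ?case by (intro exI[of _ "{h}"] exI[of _ V]) (auto intro: openin_join_topology)
next
  case (Int x V W)
  then obtain F1 W1 F2 W2 where "finite F1" "F1 \<subseteq> H" "openin (join_topology F1) W1" "x \<in> W1" "W1 \<subseteq> V"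
      "finite F2" "F2 \<subseteq> H" "openin (join_topology F2) W2" "x \<in> W2" "W2 \<subseteq> W"
    by blast
  moreover have "openin (join_topology (F1 \<union> F2)) W1" "openin (join_topology (F1 \<union> F2)) W2"
    using calculation join_topology_mono[of _ "F1 \<union> F2"] unfolding coarser_topology_def by blast+
  ultimately show ?case by (intro exI[of _ "F1 \<union> F2"] exI[of _ "W1 \<inter> W2"]) auto
next
  case (mono x V W)
  then show ?case by blast
qed

lemma subtopology_join_topology:
  assumes "H \<noteq> {}" "\<And>h. h \<in> H \<Longrightarrow> subtopology h S = Z"
  shows "subtopology (join_topology H) S = Z"
proof -
  obtain h0 where h0: "h0 \<in> H" using assms(1) by blast
  have ZS: "topspace Z \<subseteq> S" unfolding assms(2)[OF h0, symmetric] by simp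
  have "openin Z U" if U: "openin (subtopology (join_topology H) S) U" for U
  proof -
    obtain V where V: "openin (join_topology H) V" "U = V \<inter> S"
      using U unfolding openin_subtopology by blast
    have local: "x \<in> S \<longrightarrow> (\<exists>W. openin Z W \<and> x \<in> W \<and> W \<subseteq> V)" if "x \<in> V" for x
      using V(1) that
    proof (induction rule: join_topology_neighbourhood_induct)
      case (Basis h V x)
      then have "openin Z (V \<inter> S)"
        using openin_subtopology_Int[of h V S] assms(2)[OF Basis(1)] by simp
      then show ?case using Basis(3) by blast
    next
      case (Int x V W)
      then show ?case by (meson Int_mono openin_Int IntI)
    qed blast
    show ?thesis unfolding openin_subopen[of Z U]
    proof
      fix x assume "x \<in> U"
      then obtain W where "openin Z W" "x \<in> W" "W \<subseteq> V" using local V(2) by blast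
      moreover have "W \<subseteq> S" using openin_subset[OF \<open>openin Z W\<close>] ZS by blast
      ultimately show "\<exists>T. openin Z T \<and> x \<in> T \<and> T \<subseteq> U" using V(2) by blast
    qed
  qed
  moreover have "openin (subtopology (join_topology H) S) U" if "openin Z U" for U
  proof -
    have "openin (subtopology h0 S) U" using that assms(2)[OF h0] by simp
    then obtain V where "openin h0 V" "U = V \<inter> S" unfolding openin_subtopology by blast
    then show ?thesis using openin_join_topology[OF h0] openin_subtopology_Int by blast
  qed
  ultimately show ?thesis by (auto simp: topology_eq)
qed

lemma homeomorphic_map_target_unique:
  assumes "homeomorphic_map X Y f" "homeomorphic_map X Y' f"
  shows "Y = Y'"
proof -
  have open_transfer: "openin Y' U"
    if h: "homeomorphic_map X Y f" "homeomorphic_map X Y' f" and U: "openin Y U" for Y Y' U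
  proof -
    let ?V = "topspace X \<inter> f -` U"
    have "U \<subseteq> f ` topspace X"
      using openin_subset[OF U] homeomorphic_imp_surjective_map[OF h(1)] by simp
    then have eq: "U = f ` ?V" by blast
    then have "openin X ?V" using homeomorphic_map_openness[OF h(1), of ?V] U by simp
    then show ?thesis using homeomorphic_map_openness[OF h(2), of ?V] eq by simp
  qed
  show ?thesis
    using open_transfer[OF assms] open_transfer[OF assms(2,1)] by (auto simp: topology_eq)
qed

lemma connectificationsD:
  assumes "Y \<in> connectifications i X"
  shows "topspace Y = insert None (Some ` topspace X)"
    and "homeomorphic_map X (subtopology Y (Some ` topspace X)) Some"
    and "Y closure_of (Some ` topspace X) = topspace Y"
    and "connected_space Y"
    and "T_space i Y"
  using assms unfolding connectifications_def one_point_connectification_def by auto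

lemma subtopology_connectifications_eq:
  assumes "Y \<in> connectifications i X" "Y' \<in> connectifications i X"
  shows "subtopology Y (Some ` topspace X) = subtopology Y' (Some ` topspace X)"
  using homeomorphic_map_target_unique connectificationsD(2)[OF assms(1)]
    connectificationsD(2)[OF assms(2)] by blast

lemma openin_connectification_carrier:
  assumes "Y \<in> connectifications i X" "locally_compact_space X"
  shows "openin Y (Some ` topspace X)" (is "openin Y ?S")
proof -
  have "Hausdorff_space Y"
    using T_space_imp_regular_t1_Hausdorff connectificationsD(5)[OF assms(1)] by blast
  moreover have "?S \<subseteq> topspace Y" using connectificationsD(1)[OF assms(1)] by auto
  moreover have "locally_compact_space (subtopology Y ?S)"
    using homeomorphic_locally_compact_space[OF homeomorphic_map_imp_homeomorphic_space]
      connectificationsD(2)[OF assms(1)] assms(2) by blast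
  ultimately have "openin (subtopology Y (Y closure_of ?S)) ?S"
    by (rule locally_compact_subspace_openin_closure_of)
  then show ?thesis using connectificationsD(3)[OF assms(1)] by simp
qed

lemma continuous_map_connectifications_fixes_None:
  assumes Y1: "Y1 \<in> connectifications i X" and Y2: "Y2 \<in> connectifications i X"
    and lc: "locally_compact_space X"
    and f: "continuous_map Y2 Y1 f" and f_Some: "\<And>x. x \<in> topspace X \<Longrightarrow> f (Some x) = Some x"
  shows "f None = None"
proof (rule ccontr)
  let ?S = "Some ` topspace X"
  assume "f None \<noteq> None"
  moreover have "f None \<in> topspace Y1"
    using continuous_map_image_subset_topspace[OF f] connectificationsD(1)[OF Y2] by blast
  ultimately obtain x where x: "x \<in> topspace X" "f None = Some x"
    using connectificationsD(1)[OF Y1] by auto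
  have "Hausdorff_space Y2"
    using T_space_imp_regular_t1_Hausdorff connectificationsD(5)[OF Y2] by blast
  moreover have "None \<in> topspace Y2" "Some x \<in> topspace Y2"
    using connectificationsD(1)[OF Y2] x(1) by auto
  ultimately obtain N M where NM: "openin Y2 N" "openin Y2 M" "None \<in> N" "Some x \<in> M" "disjnt N M"
    unfolding Hausdorff_space_def by blast
  have "openin (subtopology Y1 ?S) (M \<inter> ?S)"
    using openin_subtopology_Int[OF NM(2)] subtopology_connectifications_eq[OF Y1 Y2] by simp
  then have "openin Y1 (M \<inter> ?S)"
    using openin_open_subtopology[OF openin_connectification_carrier[OF Y1 lc]] by simp
  then have O: "openin Y2 (N \<inter> {y \<in> topspace Y2. f y \<in> M \<inter> ?S})"
    using openin_continuous_map_preimage[OF f] NM(1) by blast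
  have "None \<in> N \<inter> {y \<in> topspace Y2. f y \<in> M \<inter> ?S}"
    using NM(3,4) x \<open>None \<in> topspace Y2\<close> by simp
  moreover have "topspace Y2 \<inter> ?S = ?S" using connectificationsD(1)[OF Y2] by auto
  ultimately have "N \<inter> {y \<in> topspace Y2. f y \<in> M \<inter> ?S} \<inter> ?S \<noteq> {}"
    using openin_Int_closure_of_eq_empty[OF O, of ?S] connectificationsD(3)[OF Y2] by auto
  then obtain z where "z \<in> topspace X" "Some z \<in> N" "f (Some z) \<in> M"
    by blast
  then show False using f_Some NM(5) unfolding disjnt_def by auto
qed

lemma conn_le_iff_coarser:
  assumes Y1: "Y1 \<in> connectifications i X" and Y2: "Y2 \<in> connectifications i X"
    and lc: "locally_compact_space X"
  shows "conn_le X Y1 Y2 \<longleftrightarrow> coarser_topology Y1 Y2"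
proof
  assume "conn_le X Y1 Y2"
  then obtain f where f: "continuous_map Y2 Y1 f" "\<And>x. x \<in> topspace X \<Longrightarrow> f (Some x) = Some x"
    unfolding conn_le_def by blast
  have "f y = y" if "y \<in> topspace Y2" for y
    using that f(2) continuous_map_connectifications_fixes_None[OF Y1 Y2 lc f]
      connectificationsD(1)[OF Y2] by auto
  then have "{y \<in> topspace Y2. f y \<in> U} = U" if "openin Y1 U" for U
    using openin_subset[OF that] connectificationsD(1)[OF Y1] connectificationsD(1)[OF Y2] by auto
  then show "coarser_topology Y1 Y2"
    unfolding coarser_topology_def using openin_continuous_map_preimage[OF f(1)] by metis
next
  assume coarser: "coarser_topology Y1 Y2"
  have ts: "topspace Y1 = topspace Y2"
    using connectificationsD(1)[OF Y1] connectificationsD(1)[OF Y2] by simp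
  have "continuous_map Y2 Y1 id"
    unfolding continuous_map_def
  proof (intro conjI allI impI)
    show "id \<in> topspace Y2 \<rightarrow> topspace Y1" using ts by simp
    fix U assume U: "openin Y1 U"
    then have "{x \<in> topspace Y2. id x \<in> U} = U" using openin_subset ts by fastforce
    then show "openin Y2 {x \<in> topspace Y2. id x \<in> U}"
      using coarser U unfolding coarser_topology_def by simp
  qed
  then show "conn_le X Y1 Y2" unfolding conn_le_def by auto
qed

lemma partial_order_conn_le:
  assumes "locally_compact_space X"
  shows "partial_order_on_set (connectifications i X) (conn_le X)"
  unfolding partial_order_on_set_def
proof (intro conjI ballI impI)
  fix Y assume "Y \<in> connectifications i X"
  then show "conn_le X Y Y"
    using conn_le_iff_coarser[OF _ _ assms] by (simp add: coarser_topology_def)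
next
  fix Y1 Y2 assume Y: "Y1 \<in> connectifications i X" "Y2 \<in> connectifications i X"
    and "conn_le X Y1 Y2 \<and> conn_le X Y2 Y1"
  then have "coarser_topology Y1 Y2" "coarser_topology Y2 Y1"
    using conn_le_iff_coarser[OF _ _ assms] by auto
  then show "Y1 = Y2" unfolding coarser_topology_def topology_eq by blast
next
  fix Y1 Y2 Y3 assume Y: "Y1 \<in> connectifications i X" "Y2 \<in> connectifications i X"
    "Y3 \<in> connectifications i X" and "conn_le X Y1 Y2 \<and> conn_le X Y2 Y3"
  then have "coarser_topology Y1 Y2" "coarser_topology Y2 Y3"
    using conn_le_iff_coarser[OF _ _ assms] by auto
  then show "conn_le X Y1 Y3"
    using conn_le_iff_coarser[OF Y(1,3) assms] unfolding coarser_topology_def by auto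
qed

lemma topspace_join_connectifications:
  assumes "H \<subseteq> connectifications i X" "H \<noteq> {}"
  shows "topspace (join_topology H) = insert None (Some ` topspace X)"
proof (rule topspace_join_topology[OF assms(2)])
  fix h assume "h \<in> H"
  then show "topspace h = insert None (Some ` topspace X)"
    using assms(1) connectificationsD(1) by blast
qed

lemma homeomorphic_map_join_connectifications:
  assumes "H \<subseteq> connectifications i X" "H \<noteq> {}"
  shows "homeomorphic_map X (subtopology (join_topology H) (Some ` topspace X)) Some"
proof -
  obtain h0 where h0: "h0 \<in> H" using assms(2) by blast
  then have h0L: "h0 \<in> connectifications i X" using assms(1) by blast
  have "subtopology (join_topology H) (Some ` topspace X) = subtopology h0 (Some ` topspace X)"
  proof (rule subtopology_join_topology[OF assms(2)])
    fix h assume "h \<in> H"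
    then show "subtopology h (Some ` topspace X) = subtopology h0 (Some ` topspace X)"
      using assms(1) subtopology_connectifications_eq[OF _ h0L] by blast
  qed
  then show ?thesis using connectificationsD(2)[OF h0L] by simp
qed

lemma T_space_join_connectifications:
  assumes lc: "locally_compact_space X" and TX: "T_space i X"
    and HL: "H \<subseteq> connectifications i X" and Hne: "H \<noteq> {}"
  shows "T_space i (join_topology H)"
proof -
  let ?S = "Some ` topspace X" and ?J = "join_topology H"
  obtain h0 where h0: "h0 \<in> H" using Hne by blast
  then have h0L: "h0 \<in> connectifications i X" using HL by blast
  have hL: "h \<in> connectifications i X" if "h \<in> H" for h using HL that by blast
  have tsH: "topspace h = insert None ?S" if "h \<in> H" for h using connectificationsD(1)[OF hL[OF that]] .
  have ts: "topspace ?J = insert None ?S" by (rule topspace_join_connectifications[OF HL Hne])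
  have XJ: "X homeomorphic_space subtopology ?J ?S"
    using homeomorphic_map_imp_homeomorphic_space[OF homeomorphic_map_join_connectifications[OF HL Hne]] .
  have open_S: "openin ?J ?S"
    using openin_join_topology[OF h0 openin_connectification_carrier[OF h0L lc]] .
  have "t1_space h0" using T_space_imp_regular_t1_Hausdorff(2)[OF connectificationsD(5)[OF h0L]] .
  then have t1: "t1_space ?J"
    using t1_space_expansive[of ?J h0] ts tsH[OF h0] openin_join_topology[OF h0] by simp
  have reg: "regular_space ?J"
  proof (rule regular_space_join_topology[OF tsH])
    fix h assume "h \<in> H"
    then show "regular_space h" using T_space_imp_regular_t1_Hausdorff(1) connectificationsD(5) hL by blast
  qed
  have ts_sub: "topspace ?J \<subseteq> insert None ?S" using ts by simp
  show ?thesis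
  proof (cases i)
    case T3half
    have "completely_regular_space ?J"
    proof (rule completely_regular_space_join_topology[OF tsH])
      fix h assume "h \<in> H"
      then show "completely_regular_space h" using connectificationsD(5)[OF hL] T3half by simp
    qed
    then show ?thesis using t1 T3half by simp
  next
    case T4
    then have "normal_space (subtopology ?J ?S)" using TX homeomorphic_normal_space[OF XJ] by simp
    then have "normal_space ?J" by (rule normal_space_one_point_extension[OF reg open_S _ ts_sub])
    then show ?thesis using t1 T4 by simp
  next
    case T5
    then have "hereditarily normal_space (subtopology ?J ?S)"
      using TX homeomorphic_hereditarily_normal_space[OF XJ] by (simp add: hereditarily_normal_space_eq)
    then have "hereditarily normal_space ?J"
      by (rule hereditarily_normal_space_one_point_extension[OF reg open_S _ ts_sub])
    then show ?thesis using t1 T5 by (simp add: hereditarily_normal_space_eq)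
  qed
qed

lemma closure_of_eq_topspace_if_locally_connectification:
  assumes ts: "topspace Y = insert None (Some ` topspace X)"
    and nbhd: "\<And>V. openin Y V \<Longrightarrow> None \<in> V \<Longrightarrow>
      \<exists>v\<in>connectifications i X. \<exists>W. openin v W \<and> None \<in> W \<and> W \<subseteq> V"
  shows "Y closure_of (Some ` topspace X) = topspace Y"
proof -
  let ?S = "Some ` topspace X"
  have "None \<in> Y closure_of ?S"
    unfolding in_closure_of
  proof (intro conjI allI impI)
    show "None \<in> topspace Y" using ts by simp
    fix V assume V: "None \<in> V \<and> openin Y V"
    then obtain v W where v: "v \<in> connectifications i X" and W: "openin v W" "None \<in> W" "W \<subseteq> V"
      using nbhd by blast
    have "None \<in> v closure_of ?S" using connectificationsD(1,3)[OF v] by simp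
    then show "\<exists>y. y \<in> ?S \<and> y \<in> V" using W unfolding in_closure_of by blast
  qed
  moreover have "?S \<subseteq> Y closure_of ?S" by (rule closure_of_subset) (simp add: ts subset_insertI)
  ultimately have "topspace Y \<subseteq> Y closure_of ?S" using ts by simp
  then show ?thesis by (rule subset_antisym[OF closure_of_subset_topspace])
qed

text \<open>A separation of Y into E1 containing None and E2 would also separate the connectification
  in which some neighbourhood W of None inside E1 is open, since E1 is the union of W and a set open
  in X.\<close>

lemma connected_space_if_locally_connectification:
  assumes lc: "locally_compact_space X"
    and ts: "topspace Y = insert None (Some ` topspace X)"
    and homeo: "homeomorphic_map X (subtopology Y (Some ` topspace X)) Some"
    and nbhd: "\<And>V. openin Y V \<Longrightarrow> None \<in> V \<Longrightarrow>
      \<exists>v\<in>connectifications i X. \<exists>W. openin v W \<and> None \<in> W \<and> W \<subseteq> V"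
  shows "connected_space Y"
proof -
  let ?S = "Some ` topspace X"
  have not_separated: False
    if E: "openin Y E1" "openin Y E2" "topspace Y \<subseteq> E1 \<union> E2" "E1 \<inter> E2 = {}" "E2 \<noteq> {}"
      and "None \<in> E1" for E1 E2
  proof -
    obtain v W where v: "v \<in> connectifications i X" and W: "openin v W" "None \<in> W" "W \<subseteq> E1"
      using nbhd[OF E(1) \<open>None \<in> E1\<close>] by blast
    have sub: "subtopology v ?S = subtopology Y ?S"
      using homeomorphic_map_target_unique[OF connectificationsD(2)[OF v] homeo] .
    have open_v: "openin v (E \<inter> ?S)" if "openin Y E" for E
      using openin_subtopology_Int[OF that, of ?S] sub
        openin_open_subtopology[OF openin_connectification_carrier[OF v lc]] by simp
    have "E1 = (E1 \<inter> ?S) \<union> W" "E2 = E2 \<inter> ?S"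
      using openin_subset[OF E(1)] openin_subset[OF E(2)] ts W(2,3) E(4) \<open>None \<in> E1\<close> by auto
    then have "openin v E1" "openin v E2" using open_v[OF E(1)] open_v[OF E(2)] W(1) by (metis openin_Un)+
    moreover have "topspace v \<subseteq> E1 \<union> E2" using connectificationsD(1)[OF v] ts E(3) by simp
    ultimately show False
      using connectificationsD(4)[OF v] E(4,5) \<open>None \<in> E1\<close> unfolding connected_space_def by blast
  qed
  show ?thesis
    unfolding connected_space_def
  proof clarify
    fix E1 E2 assume E: "openin Y E1" "openin Y E2" "topspace Y \<subseteq> E1 \<union> E2" "E1 \<inter> E2 = {}"
      "E1 \<noteq> {}" "E2 \<noteq> {}"
    then have "None \<in> E1 \<or> None \<in> E2" using ts by blast
    then show False
      using not_separated[OF E(1-4,6)] not_separated[OF E(2,1) _ _ E(5)] E(3,4) by blast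
  qed
qed

lemma join_in_connectifications:
  assumes lc: "locally_compact_space X" and TX: "T_space i X"
    and HL: "H \<subseteq> connectifications i X" and Hne: "H \<noteq> {}"
    and bounded: "\<And>F. finite F \<Longrightarrow> F \<subseteq> H \<Longrightarrow>
      \<exists>v\<in>connectifications i X. \<forall>h\<in>F. coarser_topology h v"
  shows "join_topology H \<in> connectifications i X"
proof -
  have nbhd: "\<exists>v\<in>connectifications i X. \<exists>W. openin v W \<and> None \<in> W \<and> W \<subseteq> V"
    if V: "openin (join_topology H) V" "None \<in> V" for V
  proof -
    obtain F W where FW: "finite F" "F \<subseteq> H" "openin (join_topology F) W" "None \<in> W" "W \<subseteq> V"
      using openin_join_topology_locally_finite[OF V] by blast
    obtain v where v: "v \<in> connectifications i X" "\<forall>h\<in>F. coarser_topology h v"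
      using bounded[OF FW(1,2)] by blast
    have "openin v W" using join_topology_least[of F v] v(2) FW(3) unfolding coarser_topology_def by blast
    then show ?thesis using v(1) FW(4,5) by blast
  qed
  note ts = topspace_join_connectifications[OF HL Hne]
    and homeo = homeomorphic_map_join_connectifications[OF HL Hne]
  have "one_point_connectification X (join_topology H)"
    unfolding one_point_connectification_def
    using ts homeo closure_of_eq_topspace_if_locally_connectification[OF ts nbhd]
      connected_space_if_locally_connectification[OF lc ts homeo nbhd] by simp
  then show ?thesis
    unfolding connectifications_def using T_space_join_connectifications[OF lc TX HL Hne] by blast
qed

lemma has_lub_connectifications:
  assumes lc: "locally_compact_space X" and TX: "T_space i X"
    and HL: "H \<subseteq> connectifications i X" and Hne: "H \<noteq> {}"
    and bounded: "\<And>F. finite F \<Longrightarrow> F \<subseteq> H \<Longrightarrow>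
      \<exists>u. is_ub (connectifications i X) (conn_le X) F u"
  shows "has_lub (connectifications i X) (conn_le X) H"
proof -
  let ?L = "connectifications i X" and ?J = "join_topology H"
  have le_iff: "conn_le X Y1 Y2 \<longleftrightarrow> coarser_topology Y1 Y2" if "Y1 \<in> ?L" "Y2 \<in> ?L" for Y1 Y2
    using conn_le_iff_coarser[OF that lc] .
  have "\<exists>v\<in>?L. \<forall>h\<in>F. coarser_topology h v" if F: "finite F" "F \<subseteq> H" for F
  proof -
    obtain u where u: "u \<in> ?L" "\<forall>h\<in>F. conn_le X h u"
      using bounded[OF F] unfolding is_ub_def by blast
    have "coarser_topology h u" if "h \<in> F" for h
      using u(2) that le_iff[OF _ u(1), of h] F(2) HL by blast
    then show ?thesis using u(1) by blast
  qed
  then have J: "?J \<in> ?L" by (rule join_in_connectifications[OF lc TX HL Hne])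
  have "conn_le X h ?J" if "h \<in> H" for h
    using le_iff[OF _ J, of h] coarser_join_topology[OF that] that HL by blast
  then have "is_ub ?L (conn_le X) H ?J" unfolding is_ub_def using J by blast
  moreover have "conn_le X ?J v" if "is_ub ?L (conn_le X) H v" for v
  proof -
    have v: "v \<in> ?L" "\<forall>h\<in>H. conn_le X h v" using that unfolding is_ub_def by auto
    have "coarser_topology h v" if "h \<in> H" for h
      using v(2) that le_iff[OF _ v(1), of h] HL by blast
    then show ?thesis using le_iff[OF J v(1)] join_topology_least by blast
  qed
  ultimately show ?thesis unfolding has_lub_def by blast
qed

lemma has_glb_if_has_lub:
  assumes lub: "\<And>H. H \<subseteq> L \<Longrightarrow> H \<noteq> {} \<Longrightarrow>
      (\<And>F. finite F \<Longrightarrow> F \<subseteq> H \<Longrightarrow> \<exists>u. is_ub L le F u) \<Longrightarrow> has_lub L le H"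
    and HL: "H \<subseteq> L" and Hne: "H \<noteq> {}" and l: "is_lb L le H l"
  shows "has_glb L le H"
proof -
  let ?Lo = "{v. is_lb L le H v}"
  obtain h0 where h0: "h0 \<in> H" using Hne by blast
  have "has_lub L le ?Lo"
  proof (rule lub)
    show "?Lo \<subseteq> L" unfolding is_lb_def by blast
    show "?Lo \<noteq> {}" using l by blast
    fix F assume "F \<subseteq> ?Lo"
    then have "is_ub L le F h0" using h0 HL unfolding is_ub_def is_lb_def by blast
    then show "\<exists>u. is_ub L le F u" by blast
  qed
  then obtain g where g: "is_ub L le ?Lo g" and least: "\<And>v. is_ub L le ?Lo v \<Longrightarrow> le g v"
    unfolding has_lub_def by blast
  have "le g h" if "h \<in> H" for h
  proof (rule least)
    show "is_ub L le ?Lo h" using that HL unfolding is_ub_def is_lb_def by blast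
  qed
  then have "is_lb L le H g" using g unfolding is_lb_def is_ub_def by blast
  moreover have "le v g" if "is_lb L le H v" for v using g that unfolding is_ub_def by blast
  ultimately show ?thesis unfolding has_glb_def by blast
qed

lemma compact_cond_complete_lattice_if_has_lub:
  assumes po: "partial_order_on_set L le"
    and lub: "\<And>H. H \<subseteq> L \<Longrightarrow> H \<noteq> {} \<Longrightarrow>
      (\<And>F. finite F \<Longrightarrow> F \<subseteq> H \<Longrightarrow> \<exists>u. is_ub L le F u) \<Longrightarrow> has_lub L le H"
  shows "compact_cond_complete_lattice L le"
proof -
  have "cond_complete_lattice L le"
    unfolding cond_complete_lattice_def
  proof (intro conjI allI impI po)
    fix H assume H: "H \<subseteq> L \<and> H \<noteq> {} \<and> (\<exists>u. is_ub L le H u) \<and> (\<exists>l. is_lb L le H l)"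
    then obtain u where u: "is_ub L le H u" by blast
    show "has_lub L le H"
    proof (rule lub)
      fix F assume "F \<subseteq> H"
      then have "is_ub L le F u" using u unfolding is_ub_def by blast
      then show "\<exists>u. is_ub L le F u" by blast
    qed (use H in blast)+
  next
    fix H assume "H \<subseteq> L \<and> H \<noteq> {} \<and> (\<exists>u. is_ub L le H u) \<and> (\<exists>l. is_lb L le H l)"
    then show "has_glb L le H" using has_glb_if_has_lub[OF lub] by blast
  qed
  moreover have "\<exists>H'. H' \<subseteq> H \<and> finite H' \<and> \<not> has_lub L le H'"
    if H: "H \<subseteq> L" "\<not> has_lub L le H" for H
  proof (cases "H = {}")
    case False
    have "\<exists>F. finite F \<and> F \<subseteq> H \<and> (\<nexists>u. is_ub L le F u)"
      using lub[OF H(1) False] H(2) by blast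
    then show ?thesis unfolding has_lub_def by blast
  qed (use H in blast)
  ultimately show ?thesis unfolding compact_cond_complete_lattice_def by blast
qed

theorem theorem3p2:
  fixes i :: sep_axiom and X :: "'a topology"
  assumes "locally_connected_space X"
    and "locally_compact_space X"
    and "T_space i X"
  shows "compact_cond_complete_lattice (connectifications i X) (conn_le X)"
proof (rule compact_cond_complete_lattice_if_has_lub)
  show "partial_order_on_set (connectifications i X) (conn_le X)"
    by (rule partial_order_conn_le[OF assms(2)])
  show "has_lub (connectifications i X) (conn_le X) H"
    if "H \<subseteq> connectifications i X" "H \<noteq> {}"
      "\<And>F. finite F \<Longrightarrow> F \<subseteq> H \<Longrightarrow> \<exists>u. is_ub (connectifications i X) (conn_le X) F u" for H
    using has_lub_connectifications[OF assms(2,3) that] .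
qed

end
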